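(* Let $\varphi\in\mathcal{A}$ be w.h.i.s. Then the Casimirs of the Poisson algebra $(\mathcal{A}_\varphi,\{\cdot,\cdot\}_{\mathcal{A}_\varphi})$ are exactly the constants: $H^0(\mathcal{A}_\varphi)=\mathrm{Cas}(\mathcal{A}_\varphi)=\mathbf{F}$. Equivalently, if $f\in\mathcal{A}$ satisfies $\vec\nabla f\times\vec\nabla\varphi\in\varphi\mathcal{A}^3$, then $f\in\mathbf{F}+\varphi\mathcal{A}$.
   Context: $\mathbf{F}$ is a field of characteristic zero and $\mathcal{A}=\mathbf{F}[x,y,z]$. $\vec\nabla f=(\partial f/\partial x,\partial f/\partial y,\partial f/\partial z)$ and $\times$ is the cross product on $\mathcal{A}^3$. Fix positive integers $\varpi_1,\varpi_2,\varpi_3$ without common divisor $>1$ (weights of $x,y,z$). A nonzero polynomial is weight homogeneous of degree $d$ if it is an $\mathbf{F}$-linear combination of monomials $x^ay^bz^c$ with $a\varpi_1+b\varpi_2+c\varpi_3=d$. $\varphi\in\mathcal{A}$ is w.h.i.s. if it is weight homogeneous and $\mathcal{A}_{sing}:=\mathcal{A}/\langle\partial_x\varphi,\partial_y\varphi,\partial_z\varphi\rangle$ is a nonzero finite-dimensional $\mathbf{F}$-vector space. The Poisson bracket $\{\cdot,\cdot\}_\varphi$ on $\mathcal{A}$ is determined by $\{x,y\}_\varphi=\partial_z\varphi$, $\{y,z\}_\varphi=\partial_x\varphi$, $\{z,x\}_\varphi=\partial_y\varphi$; it induces a Poisson bracket $\{\cdot,\cdot\}_{\mathcal{A}_\varphi}$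 on $\mathcal{A}_\varphi:=\mathcal{A}/\langle\varphi\rangle$ via $\{\pi(f),\pi(g)\}_{\mathcal{A}_\varphi}=\pi(\{f,g\}_\varphi)$, $\pi:\mathcal{A}\to\mathcal{A}_\varphi$ the projection. A Casimir is an element $c$ with $\{c,\cdot\}_{\mathcal{A}_\varphi}=0$. *)

theory Defs
  imports "HOL-Computational_Algebra.Polynomial"
begin

text \<open>The polynomial ring F[x,y,z] is represented as ((F[x])[y])[z], i.e. the type
  'a poly poly poly: the outermost variable is z, the middle one y, the innermost x.\<close>

type_synonym 'a mpoly3 = "'a poly poly poly"

definition dx :: "'a::field mpoly3 \<Rightarrow> 'a mpoly3" where
  "dx p = map_poly (map_poly pderiv) p"

definition dy :: "'a::field mpoly3 \<Rightarrow> 'a mpoly3" where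
  "dy p = map_poly pderiv p"

definition dz :: "'a::field mpoly3 \<Rightarrow> 'a mpoly3" where
  "dz p = pderiv p"

definition mcoeff :: "'a::zero mpoly3 \<Rightarrow> nat \<Rightarrow> nat \<Rightarrow> nat \<Rightarrow> 'a" where
  "mcoeff p a b c = coeff (coeff (coeff p c) b) a"

definition const3 :: "'a::zero \<Rightarrow> 'a mpoly3" where
  "const3 c = [:[:[:c:]:]:]"

definition weight_homogeneous ::
  "nat \<Rightarrow> nat \<Rightarrow> nat \<Rightarrow> nat \<Rightarrow> 'a::zero mpoly3 \<Rightarrow> bool" where
  "weight_homogeneous w1 w2 w3 d p \<longleftrightarrow>
     p \<noteq> 0 \<and> (\<forall>a b c. mcoeff p a b c \<noteq> 0 \<longrightarrow> a * w1 + b * w2 + c * w3 = d)"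

definition jac_ideal :: "'a::field mpoly3 \<Rightarrow> 'a mpoly3 set" where
  "jac_ideal \<phi> = {a * dx \<phi> + b * dy \<phi> + c * dz \<phi> | a b c. True}"

text \<open>A/\<langle>\<partial>\<phi>\<rangle> is a nonzero finite-dimensional F-vector space: 1 is not in the ideal,
  and finitely many polynomials span the quotient over F.\<close>
definition jac_quotient_fin_nonzero :: "'a::field mpoly3 \<Rightarrow> bool" where
  "jac_quotient_fin_nonzero \<phi> \<longleftrightarrow>
     1 \<notin> jac_ideal \<phi> \<and>
     (\<exists>S. finite S \<and> (\<forall>f. \<exists>u. f - (\<Sum>s\<in>S. const3 (u s) * s) \<in> jac_ideal \<phi>))"

definition wh_is :: "nat \<Rightarrow> nat \<Rightarrow> nat \<Rightarrow> 'a::field mpoly3 \<Rightarrow> bool" where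
  "wh_is w1 w2 w3 \<phi> \<longleftrightarrow> (\<exists>d. weight_homogeneous w1 w2 w3 d \<phi>) \<and> jac_quotient_fin_nonzero \<phi>"

definition in_pideal :: "'a::field mpoly3 \<Rightarrow> 'a mpoly3 \<Rightarrow> bool" where
  "in_pideal \<phi> f \<longleftrightarrow> (\<exists>g. f = \<phi> * g)"

text \<open>Poisson bracket {f,g}_\<phi> = \<nabla>f \<cdot> (\<nabla>g \<times> \<nabla>\<phi>)\<close>
definition pbracket :: "'a::field mpoly3 \<Rightarrow> 'a mpoly3 \<Rightarrow> 'a mpoly3 \<Rightarrow> 'a mpoly3" where
  "pbracket \<phi> f g =
     dx f * (dy g * dz \<phi> - dz g * dy \<phi>)
   + dy f * (dz g * dx \<phi> - dx g * dz \<phi>)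
   + dz f * (dx g * dy \<phi> - dy g * dx \<phi>)"

text \<open>Casimir of A_\<phi> represented by f: {\<pi> f, \<pi> g} = 0 for all g\<close>
definition casimir_rep :: "'a::field mpoly3 \<Rightarrow> 'a mpoly3 \<Rightarrow> bool" where
  "casimir_rep \<phi> f \<longleftrightarrow> (\<forall>g. in_pideal \<phi> (pbracket \<phi> f g))"

end

theory Submission
  imports Defs
begin

(* Let E = w1 x d/dx + w2 y d/dy + w3 z d/dz be the weighted Euler derivation, so that
   E phi = d phi.  With u = (w1 x, w2 y, w3 z), the identity
   (u . grad f) grad phi = (u . grad phi) grad f - u x (grad f x grad phi)
   shows that if grad f x grad phi vanishes modulo phi, then E f multiplies the Jacobian
   ideal J into (phi).  Since A/J is finite-dimensional, J contains a nonzero polynomial in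
   x alone and one in y alone; these have no common factor, so phi divides E f.
   Writing E f = phi C and solving (d + E) h = C coefficientwise (d > 0 as phi is not
   constant) gives E (f - phi h) = 0, so f - phi h is a constant because all weights are
   positive.  The Casimir condition is the same congruence, since
   {f, g} = - grad g . (grad f x grad phi). *)

section \<open>Partial derivatives\<close>

lemma map_poly_additive:
  fixes D :: "'a::comm_monoid_add \<Rightarrow> 'b::cancel_comm_monoid_add"
  assumes "\<And>a b. D (a + b) = D a + D b"
  shows "map_poly D (p + q) = map_poly D p + map_poly D q"
proof -
  have "D 0 = 0" using assms[of 0 0] by simp
  then show ?thesis by (intro poly_eqI) (simp add: coeff_map_poly assms)
qed

lemma map_poly_derivation:
  fixes D :: "'a::comm_ring_1 \<Rightarrow> 'a"
  assumes add: "\<And>a b. D (a + b) = D a + D b"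
    and leibniz: "\<And>a b. D (a * b) = D a * b + a * D b"
  shows "map_poly D (p * q) = map_poly D p * q + p * map_poly D q"
proof -
  have D0: "D 0 = 0" using add[of 0 0] by simp
  have D_sum: "D (sum g A) = (\<Sum>i\<in>A. D (g i))" for g :: "nat \<Rightarrow> 'a" and A
    using sum_comp_morphism[of D g A] D0 add by (simp add: comp_def)
  show ?thesis
    by (intro poly_eqI) (simp add: coeff_map_poly D0 coeff_mult D_sum leibniz sum.distrib)
qed

lemma map_poly_pderiv_add:
  "map_poly pderiv (p + q) = map_poly pderiv p + map_poly pderiv (q :: 'a::idom poly poly)"
  by (rule map_poly_additive) (rule pderiv_add)

lemma map_poly_pderiv_mult:
  "map_poly pderiv (p * q) = map_poly pderiv p * q + p * map_poly pderiv (q :: 'a::idom poly poly)"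
  by (rule map_poly_derivation) (simp_all add: pderiv_add pderiv_mult)

lemma dx_add: "dx (p + q) = dx p + dx q"
  unfolding dx_def by (rule map_poly_additive) (rule map_poly_pderiv_add)

lemma dy_add: "dy (p + q) = dy p + dy q"
  unfolding dy_def by (rule map_poly_pderiv_add)

lemma dz_add: "dz (p + q) = dz p + dz q"
  unfolding dz_def by (rule pderiv_add)

lemma dx_mult: "dx (p * q) = dx p * q + p * dx q"
  unfolding dx_def by (rule map_poly_derivation) (rule map_poly_pderiv_add, rule map_poly_pderiv_mult)

lemma dy_mult: "dy (p * q) = dy p * q + p * dy q"
  unfolding dy_def by (rule map_poly_pderiv_mult)

lemma dz_mult: "dz (p * q) = dz p * q + p * dz q"
  unfolding dz_def by (simp add: pderiv_mult algebra_simps)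

lemma d_const3 [simp]: "dx (const3 c) = 0" "dy (const3 c) = 0" "dz (const3 c) = 0"
  by (simp_all add: dx_def dy_def dz_def const3_def map_poly_pCons)

definition var_x :: "'a::field mpoly3" where "var_x = [:[:[:0, 1:]:]:]"

definition var_y :: "'a::field mpoly3" where "var_y = [:[:0, 1:]:]"

definition var_z :: "'a::field mpoly3" where "var_z = [:0, 1:]"

lemma d_var_x [simp]: "dx var_x = 1" "dy var_x = 0" "dz var_x = 0"
  by (simp_all add: var_x_def dx_def dy_def dz_def pderiv_pCons one_pCons map_poly_pCons)

lemma d_var_y [simp]: "dx var_y = 0" "dy var_y = 1" "dz var_y = 0"
  by (simp_all add: var_y_def dx_def dy_def dz_def pderiv_pCons one_pCons map_poly_pCons)

lemma d_var_z [simp]: "dx var_z = 0" "dy var_z = 0" "dz var_z = 1"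
  by (simp_all add: var_z_def dx_def dy_def dz_def pderiv_pCons one_pCons map_poly_pCons)

section \<open>The weighted Euler operator\<close>

lemma const3_add: "const3 (a + b) = const3 a + const3 b"
  by (simp add: const3_def)

lemma const3_mult: "const3 (a * b) = const3 a * const3 (b :: 'a::comm_semiring_1)"
  by (simp add: const3_def mult.commute)

lemma const3_0 [simp]: "const3 0 = 0"
  by (simp add: const3_def)

lemma const3_sum: "const3 (sum f A) = (\<Sum>i\<in>A. const3 (f i))"
  by (induction A rule: infinite_finite_induct) (simp_all add: const3_add)

lemma mcoeff_ext: "(\<And>a b c. mcoeff p a b c = mcoeff q a b c) \<Longrightarrow> p = q"
  unfolding mcoeff_def by (intro poly_eqI) blast

lemma mcoeff_add: "mcoeff (p + q) a b c = mcoeff p a b c + mcoeff q a b c"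
  by (simp add: mcoeff_def)

lemma mcoeff_const3: "mcoeff (const3 k) a b c = (if a = 0 \<and> b = 0 \<and> c = 0 then k else 0)"
  by (simp add: mcoeff_def const3_def coeff_pCons split: nat.split)

lemma mcoeff_const3_mult: "mcoeff (const3 k * p) a b c = k * mcoeff p a b c"
  by (simp add: mcoeff_def const3_def)

lemma mcoeff_var_x_mult: "mcoeff (var_x * p) a b c = (if a = 0 then 0 else mcoeff p (a - 1) b c)"
  by (simp add: mcoeff_def var_x_def coeff_pCons split: nat.split)

lemma mcoeff_var_y_mult: "mcoeff (var_y * p) a b c = (if b = 0 then 0 else mcoeff p a (b - 1) c)"
  by (simp add: mcoeff_def var_y_def coeff_pCons split: nat.split)

lemma mcoeff_var_z_mult: "mcoeff (var_z * p) a b c = (if c = 0 then 0 else mcoeff p a b (c - 1))"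
  by (simp add: mcoeff_def var_z_def coeff_pCons split: nat.split)

lemma mcoeff_dx: "mcoeff (dx p) a b c = of_nat (Suc a) * mcoeff p (Suc a) b c"
  by (simp add: mcoeff_def dx_def coeff_map_poly coeff_pderiv)

lemma mcoeff_dy: "mcoeff (dy p) a b c = of_nat (Suc b) * mcoeff p a (Suc b) c"
  by (simp add: mcoeff_def dy_def coeff_map_poly coeff_pderiv of_nat_poly del: of_nat_Suc)

lemma mcoeff_dz: "mcoeff (dz p) a b c = of_nat (Suc c) * mcoeff p a b (Suc c)"
  by (simp add: mcoeff_def dz_def coeff_pderiv of_nat_poly del: of_nat_Suc)

definition euler_op :: "nat \<Rightarrow> nat \<Rightarrow> nat \<Rightarrow> 'a::field mpoly3 \<Rightarrow> 'a mpoly3" where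
  "euler_op w1 w2 w3 p =
     const3 (of_nat w1) * var_x * dx p + const3 (of_nat w2) * var_y * dy p
   + const3 (of_nat w3) * var_z * dz p"

lemma mcoeff_euler_op:
  "mcoeff (euler_op w1 w2 w3 p) a b c = of_nat (a * w1 + b * w2 + c * w3) * mcoeff p a b c"
proof -
  have monomial_weights: "mcoeff (var_x * dx p) a b c = of_nat a * mcoeff p a b c"
    "mcoeff (var_y * dy p) a b c = of_nat b * mcoeff p a b c"
    "mcoeff (var_z * dz p) a b c = of_nat c * mcoeff p a b c"
    by (cases a; cases b; cases c; simp add: mcoeff_var_x_mult mcoeff_var_y_mult mcoeff_var_z_mult
        mcoeff_dx mcoeff_dy mcoeff_dz)+
  then show ?thesis
    unfolding euler_op_def
    by (simp only: mult.assoc mcoeff_add mcoeff_const3_mult monomial_weights) (simp add: algebra_simps)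
qed

lemma euler_op_add: "euler_op w1 w2 w3 (p + q) = euler_op w1 w2 w3 p + euler_op w1 w2 w3 q"
  by (simp add: euler_op_def dx_add dy_add dz_add algebra_simps)

lemma euler_op_mult: "euler_op w1 w2 w3 (p * q) = euler_op w1 w2 w3 p * q + p * euler_op w1 w2 w3 q"
  by (simp add: euler_op_def dx_mult dy_mult dz_mult algebra_simps)

lemma euler_op_weight_homogeneous:
  assumes "weight_homogeneous w1 w2 w3 d p"
  shows "euler_op w1 w2 w3 p = const3 (of_nat d) * p"
proof (rule mcoeff_ext)
  fix a b c
  show "mcoeff (euler_op w1 w2 w3 p) a b c = mcoeff (const3 (of_nat d) * p) a b c"
    using assms unfolding weight_homogeneous_def mcoeff_euler_op mcoeff_const3_mult
    by (cases "mcoeff p a b c = 0") auto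
qed

lemma euler_op_eq_0_imp_const:
  fixes p :: "'a::field_char_0 mpoly3"
  assumes "w1 > 0" "w2 > 0" "w3 > 0" "euler_op w1 w2 w3 p = 0"
  shows "\<exists>c. p = const3 c"
proof (intro exI mcoeff_ext)
  fix a b c
  have "of_nat (a * w1 + b * w2 + c * w3) * mcoeff p a b c = (0::'a)"
    using assms(4) mcoeff_euler_op[of w1 w2 w3 p a b c] by (simp add: mcoeff_def)
  then have "a * w1 + b * w2 + c * w3 = 0 \<or> mcoeff p a b c = 0"
    by (simp only: mult_eq_0_iff of_nat_eq_0_iff)
  then show "mcoeff p a b c = mcoeff (const3 (mcoeff p 0 0 0)) a b c"
    using assms(1-3) by (auto simp: mcoeff_const3)
qed

definition scale_mcoeffs :: "(nat \<Rightarrow> nat \<Rightarrow> nat \<Rightarrow> 'a) \<Rightarrow> 'a::comm_semiring_0 mpoly3 \<Rightarrow> 'a mpoly3" where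
  "scale_mcoeffs F g =
     (\<Sum>c\<le>degree g. monom (\<Sum>b\<le>degree (coeff g c). monom
        (\<Sum>a\<le>degree (coeff (coeff g c) b). monom (F a b c * mcoeff g a b c) a) b) c)"

lemma mcoeff_scale_mcoeffs: "mcoeff (scale_mcoeffs F g) a b c = F a b c * mcoeff g a b c"
  by (simp add: scale_mcoeffs_def mcoeff_def coeff_sum coeff_eq_0)

lemma euler_op_shift_surj:
  fixes g :: "'a::field_char_0 mpoly3"
  assumes "d > 0"
  shows "\<exists>h. const3 (of_nat d) * h + euler_op w1 w2 w3 h = g"
proof
  define h where "h = scale_mcoeffs (\<lambda>a b c. 1 / of_nat (d + a * w1 + b * w2 + c * w3)) g"
  show "const3 (of_nat d) * h + euler_op w1 w2 w3 h = g"
  proof (rule mcoeff_ext)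
    fix a b c
    define N :: 'a where "N = of_nat (d + a * w1 + b * w2 + c * w3)"
    have "N \<noteq> 0" using assms by (simp only: N_def of_nat_eq_0_iff)
    have "mcoeff (const3 (of_nat d) * h + euler_op w1 w2 w3 h) a b c
        = (of_nat d + of_nat (a * w1 + b * w2 + c * w3)) * (mcoeff g a b c / N)"
      by (simp only: h_def N_def mcoeff_add mcoeff_const3_mult mcoeff_euler_op mcoeff_scale_mcoeffs
          distrib_right) simp
    also have "\<dots> = N * (mcoeff g a b c / N)"
      by (simp add: N_def add.assoc)
    finally show "mcoeff (const3 (of_nat d) * h + euler_op w1 w2 w3 h) a b c = mcoeff g a b c"
      using \<open>N \<noteq> 0\<close> by simp
  qed
qed

section \<open>The Jacobian ideal\<close>

lemma jac_ideal_0: "0 \<in> jac_ideal \<phi>"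
proof -
  have "0 = 0 * dx \<phi> + 0 * dy \<phi> + 0 * dz \<phi>" by simp
  then show ?thesis unfolding jac_ideal_def by blast
qed

lemma jac_ideal_add: "u \<in> jac_ideal \<phi> \<Longrightarrow> v \<in> jac_ideal \<phi> \<Longrightarrow> u + v \<in> jac_ideal \<phi>"
proof (unfold jac_ideal_def, clarify)
  fix a b c a' b' c'
  have "a * dx \<phi> + b * dy \<phi> + c * dz \<phi> + (a' * dx \<phi> + b' * dy \<phi> + c' * dz \<phi>)
      = (a + a') * dx \<phi> + (b + b') * dy \<phi> + (c + c') * dz \<phi>"
    by (simp add: algebra_simps)
  then show "\<exists>a'' b'' c''. a * dx \<phi> + b * dy \<phi> + c * dz \<phi> + (a' * dx \<phi> + b' * dy \<phi> + c' * dz \<phi>)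
      = a'' * dx \<phi> + b'' * dy \<phi> + c'' * dz \<phi> \<and> True"
    by blast
qed

lemma jac_ideal_mult: "u \<in> jac_ideal \<phi> \<Longrightarrow> r * u \<in> jac_ideal \<phi>"
proof (unfold jac_ideal_def, clarify)
  fix a b c
  have "r * (a * dx \<phi> + b * dy \<phi> + c * dz \<phi>) = (r * a) * dx \<phi> + (r * b) * dy \<phi> + (r * c) * dz \<phi>"
    by (simp add: algebra_simps)
  then show "\<exists>a' b' c'. r * (a * dx \<phi> + b * dy \<phi> + c * dz \<phi>) = a' * dx \<phi> + b' * dy \<phi> + c' * dz \<phi> \<and> True"
    by blast
qed

lemma jac_ideal_sum: "(\<And>i. i \<in> A \<Longrightarrow> f i \<in> jac_ideal \<phi>) \<Longrightarrow> sum f A \<in> jac_ideal \<phi>"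
  by (induction A rule: infinite_finite_induct) (simp_all add: jac_ideal_0 jac_ideal_add)

lemma nontrivial_relation_biggerset:
  fixes v :: "'i \<Rightarrow> 's \<Rightarrow> 'a::field"
  assumes "finite S" "finite I" "card S < card I"
  shows "\<exists>l. (\<exists>i\<in>I. l i \<noteq> 0) \<and> (\<forall>t\<in>S. (\<Sum>i\<in>I. l i * v i t) = 0)"
  using assms
proof (induction S arbitrary: I v rule: finite_induct)
  case empty
  then obtain i where "i \<in> I" by fastforce
  then show ?case by (intro exI[of _ "\<lambda>_. 1"]) auto
next
  case (insert s S)
  show ?case
  proof (cases "\<forall>i\<in>I. v i s = 0")
    case True
    obtain l where "\<exists>i\<in>I. l i \<noteq> 0" "\<forall>t\<in>S. (\<Sum>i\<in>I. l i * v i t) = 0"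
      using insert.IH[of I v] insert.prems insert.hyps by auto
    with True show ?thesis by auto
  next
    case False
    then obtain j where j: "j \<in> I" "v j s \<noteq> 0" by blast
    define I' where "I' = I - {j}"
    \<comment> \<open>Gaussian elimination of coordinate s by the pivot vector v j\<close>
    define w where "w i t = v i t - (v i s / v j s) * v j t" for i t
    have "finite I'" "card S < card I'"
      using insert.prems insert.hyps j by (auto simp: I'_def)
    then obtain m where m: "\<exists>i\<in>I'. m i \<noteq> 0" "\<forall>t\<in>S. (\<Sum>i\<in>I'. m i * w i t) = 0"
      using insert.IH[of I' w] by blast
    define l where "l i = (if i = j then - (\<Sum>i\<in>I'. m i * v i s) / v j s else m i)" for i
    have "(\<Sum>i\<in>I. l i * v i t) = 0" if t: "t \<in> insert s S" for t
    proof -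
      have w_rel: "(\<Sum>i\<in>I'. m i * w i t) = 0"
        using m(2) t j(2) by (cases "t = s") (auto simp: w_def)
      have pivot: "m i * v i t = m i * w i t + m i * v i s / v j s * v j t" for i
        using j(2) by (simp add: w_def algebra_simps)
      have "(\<Sum>i\<in>I. l i * v i t) = l j * v j t + (\<Sum>i\<in>I'. m i * v i t)"
        using insert.prems j by (simp add: I'_def l_def sum.remove)
      also have "(\<Sum>i\<in>I'. m i * v i t)
          = (\<Sum>i\<in>I'. m i * w i t) + (\<Sum>i\<in>I'. m i * v i s) / v j s * v j t"
        by (simp only: pivot sum.distrib sum_distrib_right sum_divide_distrib)
      finally show ?thesis using w_rel j by (simp add: l_def)
    qed
    moreover have "\<exists>i\<in>I. l i \<noteq> 0" using m(1) by (auto simp: l_def I'_def)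
    ultimately show ?thesis by blast
  qed
qed

lemma map_poly_const3_sum:
  fixes f :: "'b \<Rightarrow> 'a::comm_ring_1 poly"
  shows "map_poly const3 (sum f A) = (\<Sum>i\<in>A. map_poly const3 (f i))"
proof (induction A rule: infinite_finite_induct)
  case (insert i A)
  have "map_poly const3 (f i + sum f A) = map_poly const3 (f i) + map_poly const3 (sum f A)"
    by (rule map_poly_additive) (rule const3_add)
  with insert show ?case by simp
qed simp_all

lemma exists_poly_in_jac_ideal:
  assumes "jac_quotient_fin_nonzero \<phi>"
  shows "\<exists>p. p \<noteq> 0 \<and> poly (map_poly const3 p) m \<in> jac_ideal \<phi>"
proof -
  obtain S where S: "finite S" "\<forall>f. \<exists>u. f - (\<Sum>s\<in>S. const3 (u s) * s) \<in> jac_ideal \<phi>"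
    using assms unfolding jac_quotient_fin_nonzero_def by blast
  obtain u where u: "\<And>k. m ^ k - (\<Sum>s\<in>S. const3 (u k s) * s) \<in> jac_ideal \<phi>"
    using choice[of "\<lambda>k u. m ^ k - (\<Sum>s\<in>S. const3 (u s) * s) \<in> jac_ideal \<phi>"] S(2) by blast
  define n where "n = card S"
  obtain l where l: "\<exists>k\<in>{..n}. l k \<noteq> 0" "\<forall>s\<in>S. (\<Sum>k\<le>n. l k * u k s) = 0"
    using nontrivial_relation_biggerset[OF S(1), of "{..n}" u] by (auto simp: n_def)
  define p where "p = (\<Sum>k\<le>n. monom (l k) k)"
  have "coeff p k = l k" if "k \<le> n" for k
    using that by (simp add: p_def coeff_sum)
  then have "p \<noteq> 0" using l(1) by auto
  have "map_poly const3 p = (\<Sum>k\<le>n. monom (const3 (l k)) k)"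
    by (simp add: p_def map_poly_const3_sum map_poly_monom)
  then have "poly (map_poly const3 p) m = (\<Sum>k\<le>n. const3 (l k) * m ^ k)"
    by (simp add: poly_sum poly_monom)
  also have "\<dots> = (\<Sum>k\<le>n. const3 (l k) * (m ^ k - (\<Sum>s\<in>S. const3 (u k s) * s)))"
  proof -
    have "(\<Sum>k\<le>n. const3 (l k) * (\<Sum>s\<in>S. const3 (u k s) * s))
        = (\<Sum>k\<le>n. \<Sum>s\<in>S. const3 (l k * u k s) * s)"
      by (simp add: sum_distrib_left const3_mult mult.assoc)
    also have "\<dots> = (\<Sum>s\<in>S. const3 (\<Sum>k\<le>n. l k * u k s) * s)"
      by (simp add: const3_sum sum_distrib_right flip: sum.swap[of _ S])
    also have "\<dots> = 0" using l(2) by simp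
    finally show ?thesis by (simp add: right_diff_distrib sum_subtractf)
  qed
  also have "\<dots> \<in> jac_ideal \<phi>"
    by (intro jac_ideal_sum jac_ideal_mult u)
  finally show ?thesis using \<open>p \<noteq> 0\<close> by blast
qed

section \<open>Polynomials in x alone and in y alone\<close>

lemma poly_map_const3_var_x: "poly (map_poly const3 p) var_x = [:[:p:]:]"
  by (induction p) (simp_all add: map_poly_pCons const3_def var_x_def)

lemma poly_map_const3_var_y: "poly (map_poly const3 p) var_y = [:map_poly (\<lambda>c. [:c:]) p:]"
  by (induction p) (simp_all add: map_poly_pCons const3_def var_y_def)

lemma const_poly_dvd_scalar_poly_mult_cancel:
  fixes p q :: "'a::field poly" and B :: "'a poly poly"
  assumes "q \<noteq> 0" and "[:p:] dvd map_poly (\<lambda>c. [:c:]) q * B"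
  shows "[:p:] dvd B"
proof -
  define q' where "q' = map_poly (\<lambda>c. [:c:]) q"
  \<comment> \<open>reduction of the coefficients modulo p; it commutes with multiplication by q', whose coefficients are scalars\<close>
  define red where "red C = map_poly (\<lambda>r. r mod p) C" for C :: "'a poly poly"
  have dvd_iff_red: "[:p:] dvd C \<longleftrightarrow> red C = 0" for C
    by (simp add: red_def const_poly_dvd_iff poly_eq_iff coeff_map_poly dvd_eq_mod_eq_0)
  have mod_sum: "sum f A mod p = (\<Sum>i\<in>A. f i mod p)" for f :: "nat \<Rightarrow> 'a poly" and A
    by (induction A rule: infinite_finite_induct) (simp_all add: poly_mod_add_left)
  have red_mult: "red (q' * C) = q' * red C" for C
  proof (rule poly_eqI)
    fix n
    have coeff_q'_mult: "coeff (q' * D) n = (\<Sum>i\<le>n. smult (coeff q i) (coeff D (n - i)))" for D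
      by (simp add: q'_def coeff_mult coeff_map_poly)
    show "coeff (red (q' * C)) n = coeff (q' * red C) n"
      by (simp add: coeff_q'_mult red_def coeff_map_poly mod_sum mod_smult_left)
  qed
  have "q' \<noteq> 0"
    using assms(1) by (simp add: q'_def map_poly_eq_0_iff)
  moreover have "q' * red B = 0"
    using assms(2) by (simp add: dvd_iff_red red_mult flip: q'_def)
  ultimately show ?thesis by (simp add: dvd_iff_red)
qed

lemma x_poly_dvd_mult_y_poly_cancel:
  fixes p q :: "'a::field poly" and A :: "'a mpoly3"
  assumes "q \<noteq> 0" and "[:[:p:]:] dvd A * [:map_poly (\<lambda>c. [:c:]) q:]"
  shows "[:[:p:]:] dvd A"
  using assms const_poly_dvd_scalar_poly_mult_cancel[OF assms(1)]
  by (simp add: const_poly_dvd_iff)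

lemma dvd_if_dvd_mult_x_poly_and_y_poly:
  fixes \<phi> A :: "'a::field mpoly3" and p q :: "'a poly"
  assumes "\<phi> \<noteq> 0" "p \<noteq> 0" "q \<noteq> 0"
    and "\<phi> dvd A * [:[:p:]:]" "\<phi> dvd A * [:map_poly (\<lambda>c. [:c:]) q:]"
  shows "\<phi> dvd A"
proof -
  define P where "P = [:[:p:]:]"
  define Q where "Q = [:map_poly (\<lambda>c. [:c:]) q:]"
  obtain AP AQ where AP: "A * P = \<phi> * AP" and AQ: "A * Q = \<phi> * AQ"
    using assms(4,5) unfolding P_def Q_def by (auto elim!: dvdE)
  have "\<phi> * (AP * Q) = (A * P) * Q" unfolding AP by (rule mult.assoc[symmetric])
  also have "\<dots> = (A * Q) * P" by (simp only: ac_simps)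
  also have "\<dots> = \<phi> * (AQ * P)" unfolding AQ by (rule mult.assoc)
  finally have "\<phi> * (AP * Q) = \<phi> * (AQ * P)" .
  then have "P dvd AP * Q"
    using assms(1) by simp
  then have "P dvd AP"
    unfolding P_def Q_def by (rule x_poly_dvd_mult_y_poly_cancel[OF assms(3)])
  then obtain C where C: "AP = P * C" by (rule dvdE)
  have "P \<noteq> 0" using assms(2) by (simp add: P_def)
  moreover have "A * P = (\<phi> * C) * P"
    by (simp add: AP C ac_simps)
  ultimately show ?thesis by simp
qed

section \<open>Casimirs\<close>

lemma dot_mult_dvd_of_cross_dvd:
  fixes r :: "'a::comm_ring_1"
  assumes "r dvd a2 * b3 - a3 * b2" "r dvd a3 * b1 - a1 * b3" "r dvd a1 * b2 - a2 * b1"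
    and "r dvd u1 * b1 + u2 * b2 + u3 * b3"
  shows "r dvd (u1 * a1 + u2 * a2 + u3 * a3) * (v1 * b1 + v2 * b2 + v3 * b3)"
proof -
  \<comment> \<open>the components of u \<times> (a \<times> b) = (u \<bullet> b) a - (u \<bullet> a) b\<close>
  have "(u1 * a1 + u2 * a2 + u3 * a3) * b1
      = (u1 * b1 + u2 * b2 + u3 * b3) * a1 - u2 * (a1 * b2 - a2 * b1) + u3 * (a3 * b1 - a1 * b3)"
    "(u1 * a1 + u2 * a2 + u3 * a3) * b2
      = (u1 * b1 + u2 * b2 + u3 * b3) * a2 - u3 * (a2 * b3 - a3 * b2) + u1 * (a1 * b2 - a2 * b1)"
    "(u1 * a1 + u2 * a2 + u3 * a3) * b3
      = (u1 * b1 + u2 * b2 + u3 * b3) * a3 - u1 * (a3 * b1 - a1 * b3) + u2 * (a2 * b3 - a3 * b2)"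
    by (simp_all add: algebra_simps)
  then have "r dvd (u1 * a1 + u2 * a2 + u3 * a3) * b1" "r dvd (u1 * a1 + u2 * a2 + u3 * a3) * b2"
    "r dvd (u1 * a1 + u2 * a2 + u3 * a3) * b3"
    using assms by (simp_all add: dvd_add dvd_diff dvd_mult)
  then have "r dvd v1 * ((u1 * a1 + u2 * a2 + u3 * a3) * b1) + v2 * ((u1 * a1 + u2 * a2 + u3 * a3) * b2)
      + v3 * ((u1 * a1 + u2 * a2 + u3 * a3) * b3)"
    by (blast intro: dvd_add dvd_mult)
  then show ?thesis
    by (simp only: distrib_left mult.left_commute[of _ v1] mult.left_commute[of _ v2]
        mult.left_commute[of _ v3])
qed

lemma in_pideal_iff_dvd: "in_pideal \<phi> f \<longleftrightarrow> \<phi> dvd f"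
  by (auto simp: in_pideal_def dvd_def)

definition cross_grad_in_pideal :: "'a::field mpoly3 \<Rightarrow> 'a mpoly3 \<Rightarrow> bool" where
  "cross_grad_in_pideal \<phi> f \<longleftrightarrow>
     in_pideal \<phi> (dy f * dz \<phi> - dz f * dy \<phi>)
   \<and> in_pideal \<phi> (dz f * dx \<phi> - dx f * dz \<phi>)
   \<and> in_pideal \<phi> (dx f * dy \<phi> - dy f * dx \<phi>)"

lemma casimir_rep_iff_cross_grad_in_pideal: "casimir_rep \<phi> f \<longleftrightarrow> cross_grad_in_pideal \<phi> f"
proof
  assume "casimir_rep \<phi> f"
  then have "\<phi> dvd pbracket \<phi> f var_x" "\<phi> dvd pbracket \<phi> f var_y" "\<phi> dvd pbracket \<phi> f var_z"
    by (simp_all add: casimir_rep_def in_pideal_iff_dvd)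
  moreover have "pbracket \<phi> f var_x = - (dy f * dz \<phi> - dz f * dy \<phi>)"
    "pbracket \<phi> f var_y = - (dz f * dx \<phi> - dx f * dz \<phi>)"
    "pbracket \<phi> f var_z = - (dx f * dy \<phi> - dy f * dx \<phi>)"
    by (simp_all add: pbracket_def algebra_simps)
  ultimately show "cross_grad_in_pideal \<phi> f"
    by (simp only: cross_grad_in_pideal_def in_pideal_iff_dvd dvd_minus_iff)
next
  assume "cross_grad_in_pideal \<phi> f"
  then have "\<phi> dvd - (dx g * (dy f * dz \<phi> - dz f * dy \<phi>) + dy g * (dz f * dx \<phi> - dx f * dz \<phi>)
      + dz g * (dx f * dy \<phi> - dy f * dx \<phi>))" for g
    by (simp add: cross_grad_in_pideal_def in_pideal_iff_dvd)
  moreover have "pbracket \<phi> f g = - (dx g * (dy f * dz \<phi> - dz f * dy \<phi>)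
      + dy g * (dz f * dx \<phi> - dx f * dz \<phi>) + dz g * (dx f * dy \<phi> - dy f * dx \<phi>))" for g
    by (simp add: pbracket_def algebra_simps)
  ultimately show "casimir_rep \<phi> f"
    by (simp add: casimir_rep_def in_pideal_iff_dvd)
qed

lemma cross_grad_in_pideal_const_add_mult: "cross_grad_in_pideal \<phi> (const3 c + \<phi> * h)"
proof -
  have "dy (const3 c + \<phi> * h) * dz \<phi> - dz (const3 c + \<phi> * h) * dy \<phi> = \<phi> * (dy h * dz \<phi> - dz h * dy \<phi>)"
    "dz (const3 c + \<phi> * h) * dx \<phi> - dx (const3 c + \<phi> * h) * dz \<phi> = \<phi> * (dz h * dx \<phi> - dx h * dz \<phi>)"
    "dx (const3 c + \<phi> * h) * dy \<phi> - dy (const3 c + \<phi> * h) * dx \<phi> = \<phi> * (dx h * dy \<phi> - dy h * dx \<phi>)"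
    by (simp_all add: dx_add dy_add dz_add dx_mult dy_mult dz_mult algebra_simps)
  then show ?thesis
    by (simp add: cross_grad_in_pideal_def in_pideal_def)
qed

lemma weight_homogeneous_degree_pos:
  fixes \<phi> :: "'a::field_char_0 mpoly3"
  assumes "w1 > 0" "w2 > 0" "w3 > 0"
    and "weight_homogeneous w1 w2 w3 d \<phi>" and "jac_quotient_fin_nonzero \<phi>"
  shows "d > 0"
proof (rule ccontr)
  assume "\<not> d > 0"
  then have "euler_op w1 w2 w3 \<phi> = 0"
    using euler_op_weight_homogeneous[OF assms(4)] by simp
  then obtain k where "\<phi> = const3 k"
    using euler_op_eq_0_imp_const[OF assms(1-3)] by blast
  then have "jac_ideal \<phi> = {0}"
    by (simp add: jac_ideal_def)
  moreover obtain p where "p \<noteq> 0" "poly (map_poly const3 p) var_x \<in> jac_ideal \<phi>"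
    using exists_poly_in_jac_ideal[OF assms(5)] by blast
  ultimately show False
    by (simp add: poly_map_const3_var_x)
qed

lemma euler_op_dvd_if_cross_grad_in_pideal:
  assumes "weight_homogeneous w1 w2 w3 d \<phi>" and "jac_quotient_fin_nonzero \<phi>"
    and "cross_grad_in_pideal \<phi> f"
  shows "\<phi> dvd euler_op w1 w2 w3 f"
proof -
  have "\<phi> dvd euler_op w1 w2 w3 f * j" if "j \<in> jac_ideal \<phi>" for j
  proof -
    obtain a b c where j: "j = a * dx \<phi> + b * dy \<phi> + c * dz \<phi>"
      using \<open>j \<in> jac_ideal \<phi>\<close> unfolding jac_ideal_def by blast
    have "\<phi> dvd euler_op w1 w2 w3 \<phi>"
      by (simp add: euler_op_weight_homogeneous[OF assms(1)])
    with assms(3) show ?thesis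
      unfolding j euler_op_def cross_grad_in_pideal_def in_pideal_iff_dvd
      by (intro dot_mult_dvd_of_cross_dvd) (simp_all add: mult.commute)
  qed
  moreover obtain p where "p \<noteq> 0" "[:[:p:]:] \<in> jac_ideal \<phi>"
    using exists_poly_in_jac_ideal[OF assms(2), of var_x] by (auto simp: poly_map_const3_var_x)
  moreover obtain q where "q \<noteq> 0" "[:map_poly (\<lambda>c. [:c:]) q:] \<in> jac_ideal \<phi>"
    using exists_poly_in_jac_ideal[OF assms(2), of var_y] by (auto simp: poly_map_const3_var_y)
  moreover have "\<phi> \<noteq> 0"
    using assms(1) by (simp add: weight_homogeneous_def)
  ultimately show ?thesis
    using dvd_if_dvd_mult_x_poly_and_y_poly by blast
qed

lemma const_add_mult_if_euler_op_dvd: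
  fixes \<phi> f :: "'a::field_char_0 mpoly3"
  assumes "w1 > 0" "w2 > 0" "w3 > 0"
    and "weight_homogeneous w1 w2 w3 d \<phi>" and "d > 0" and "\<phi> dvd euler_op w1 w2 w3 f"
  shows "\<exists>c h. f = const3 c + \<phi> * h"
proof -
  obtain C where C: "euler_op w1 w2 w3 f = \<phi> * C"
    using assms(6) by (rule dvdE)
  obtain h where h: "const3 (of_nat d) * h + euler_op w1 w2 w3 h = C"
    using euler_op_shift_surj[OF assms(5)] by blast
  have "euler_op w1 w2 w3 (\<phi> * h) = \<phi> * C"
    by (simp add: euler_op_mult euler_op_weight_homogeneous[OF assms(4)] algebra_simps flip: h)
  then have "euler_op w1 w2 w3 (f - \<phi> * h) = 0"
    using euler_op_add[of w1 w2 w3 "f - \<phi> * h" "\<phi> * h"] C by simp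
  then obtain c where "f - \<phi> * h = const3 c"
    using euler_op_eq_0_imp_const[OF assms(1-3)] by blast
  then show ?thesis
    by (auto simp: diff_eq_eq)
qed

lemma cross_grad_in_pideal_iff_const_mod_pideal:
  fixes \<phi> :: "'a::field_char_0 mpoly3"
  assumes "w1 > 0" "w2 > 0" "w3 > 0" and "wh_is w1 w2 w3 \<phi>"
  shows "cross_grad_in_pideal \<phi> f \<longleftrightarrow> (\<exists>c. in_pideal \<phi> (f - const3 c))"
proof
  obtain d where hom: "weight_homogeneous w1 w2 w3 d \<phi>" and fin: "jac_quotient_fin_nonzero \<phi>"
    using assms(4) unfolding wh_is_def by blast
  assume "cross_grad_in_pideal \<phi> f"
  then have "\<phi> dvd euler_op w1 w2 w3 f"
    by (rule euler_op_dvd_if_cross_grad_in_pideal[OF hom fin])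
  then obtain c h where "f = const3 c + \<phi> * h"
    using const_add_mult_if_euler_op_dvd[OF assms(1-3) hom weight_homogeneous_degree_pos[OF assms(1-3) hom fin]]
    by blast
  then have "in_pideal \<phi> (f - const3 c)"
    by (simp add: in_pideal_def)
  then show "\<exists>c. in_pideal \<phi> (f - const3 c)" ..
next
  assume "\<exists>c. in_pideal \<phi> (f - const3 c)"
  then obtain c h where "f - const3 c = \<phi> * h"
    by (auto simp: in_pideal_def)
  then have "f = const3 c + \<phi> * h"
    by (simp add: algebra_simps)
  then show "cross_grad_in_pideal \<phi> f"
    using cross_grad_in_pideal_const_add_mult by simp
qed

theorem mainTheorem9:
  fixes \<phi> :: "'a::field_char_0 mpoly3"
    and w1 w2 w3 :: nat
  assumes "w1 > 0" and "w2 > 0" and "w3 > 0"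
    and "gcd w1 (gcd w2 w3) = 1"
    and "wh_is w1 w2 w3 \<phi>"
  shows "(\<forall>f. casimir_rep \<phi> f \<longleftrightarrow> (\<exists>c. in_pideal \<phi> (f - const3 c)))
       \<and> (\<forall>f. in_pideal \<phi> (dy f * dz \<phi> - dz f * dy \<phi>)
              \<and> in_pideal \<phi> (dz f * dx \<phi> - dx f * dz \<phi>)
              \<and> in_pideal \<phi> (dx f * dy \<phi> - dy f * dx \<phi>)
              \<longrightarrow> (\<exists>c. in_pideal \<phi> (f - const3 c)))"
proof -
  \<comment> \<open>The weights need not be coprime: only their positivity is used.\<close>
  have "casimir_rep \<phi> f \<longleftrightarrow> cross_grad_in_pideal \<phi> f"
    and "cross_grad_in_pideal \<phi> f \<longleftrightarrow> (\<exists>c. in_pideal \<phi> (f - const3 c))" for f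
    by (rule casimir_rep_iff_cross_grad_in_pideal)
      (rule cross_grad_in_pideal_iff_const_mod_pideal[OF assms(1-3,5)])
  then show ?thesis
    unfolding cross_grad_in_pideal_def by blast
qed

end
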